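(* For all real $x,y$, $$e^{xy}=\sum_{m,n=0}^{\infty}(-1)^n H_{m,n}(x)\frac{y^{m+n}}{m!\,n!}.$$
   Context: For integers $m,n\ge 0$, the two-index Hermite polynomial is $H_{m,n}(x)=\left(-\frac{d}{dx}+2x\right)^m(x^n)$, i.e. the operator $f\mapsto -f'+2xf$ applied $m$ times to $x^n$. *)

theory Defs
  imports "HOL-Analysis.Analysis" "HOL-Computational_Algebra.Polynomial"
begin

definition hermite_op :: "real poly \<Rightarrow> real poly" where
  "hermite_op p = - pderiv p + [:0, 2:] * p"

definition H2 :: "nat \<Rightarrow> nat \<Rightarrow> real poly" where
  "H2 m n = (hermite_op ^^ m) (monom 1 n)"

end

theory Submission
  imports Defs "HOL-Analysis.Analysis"
begin

(*
  Write A = -D + 2X for the raising operator and h_k = H_{k,0}(x) for the Hermite polynomials.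

  1. Operator calculus: from the commutation relations [A, X] = -1 and [D, A] = 2 we get the
     recurrences  H_{m,n+1} = X H_{m,n} - m H_{m-1,n}  and  h_{k+2} = 2X h_{k+1} - 2(k+1) h_k.
  2. Closed forms: the second recurrence identifies h_k/k! with the coefficient of y^k in
     exp(2xy) exp(-y^2); the first one expresses H_{m,n}(x) through h_{m-j}(x), j <= min m n.
  3. Summation: products of absolutely summable families are summable on the product index
     set, and grouping such a family along a map with finite fibres preserves the sum.
     This yields the Hermite generating function  sum_k h_k(x) y^k/k! = exp(2xy - y^2),
     and then the theorem, by grouping the product of the three series for exp(-xy),
     exp(2xy - y^2) and exp(y^2) along (a, k, j) |-> (k + j, a + j).
*)


section \<open>Commutation relations of the raising operator\<close>

lemma hermite_op_add: "hermite_op (p + q) = hermite_op p + hermite_op q"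
  by (simp add: hermite_op_def pderiv_add algebra_simps smult_add_right)

lemma hermite_op_diff: "hermite_op (p - q) = hermite_op p - hermite_op q"
  by (simp add: hermite_op_def pderiv_diff algebra_simps smult_diff_right)

lemma hermite_op_smult: "hermite_op (smult c p) = smult c (hermite_op p)"
  by (simp add: hermite_op_def pderiv_smult smult_add_right smult_diff_right)

lemma hermite_op_power_0: "(hermite_op ^^ m) 0 = 0"
  by (induction m) (simp_all add: hermite_op_def)

lemma hermite_op_times_X: "hermite_op (pCons 0 p) = pCons 0 (hermite_op p) - p"
  by (simp add: hermite_op_def pderiv_mult pderiv_pCons algebra_simps)

lemma hermite_op_power_times_X:
  "(hermite_op ^^ m) ([:0,1:] * p) =
     [:0,1:] * (hermite_op ^^ m) p - smult (of_nat m) ((hermite_op ^^ (m - 1)) p)"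
proof (induction m)
  case 0
  then show ?case by simp
next
  case (Suc m)
  show ?case
  proof (cases m)
    case 0
    then show ?thesis by (simp add: hermite_op_times_X)
  next
    case (Suc k)
    have "(hermite_op ^^ Suc m) ([:0,1:] * p) =
          hermite_op ([:0,1:] * (hermite_op ^^ m) p - smult (of_nat m) ((hermite_op ^^ (m - 1)) p))"
      using Suc.IH by simp
    also have "\<dots> = [:0,1:] * (hermite_op ^^ Suc m) p - (hermite_op ^^ m) p
                       - smult (of_nat m) ((hermite_op ^^ m) p)"
      using Suc by (simp add: hermite_op_diff hermite_op_times_X hermite_op_smult)
    also have "\<dots> = [:0,1:] * (hermite_op ^^ Suc m) p - smult (of_nat (Suc m)) ((hermite_op ^^ m) p)"
      by (simp add: algebra_simps smult_add_left)
    finally show ?thesis by simp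
  qed
qed

lemma pderiv_hermite_op: "pderiv (hermite_op p) = hermite_op (pderiv p) + smult 2 p"
  by (simp add: hermite_op_def pderiv_mult pderiv_pCons pderiv_add pderiv_minus pderiv_diff
                pderiv_smult algebra_simps)

lemma pderiv_hermite_op_power:
  "pderiv ((hermite_op ^^ m) p) =
     (hermite_op ^^ m) (pderiv p) + smult (2 * of_nat m) ((hermite_op ^^ (m - 1)) p)"
proof (induction m)
  case 0
  then show ?case by simp
next
  case (Suc m)
  show ?case
  proof (cases m)
    case 0
    then show ?thesis by (simp add: pderiv_hermite_op)
  next
    case (Suc k)
    have "pderiv ((hermite_op ^^ Suc m) p) =
          hermite_op (pderiv ((hermite_op ^^ m) p)) + smult 2 ((hermite_op ^^ m) p)"
      by (simp add: pderiv_hermite_op)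
    also have "\<dots> = (hermite_op ^^ Suc m) (pderiv p) + smult (2 * of_nat m) ((hermite_op ^^ m) p)
                       + smult 2 ((hermite_op ^^ m) p)"
      using Suc.IH Suc by (simp add: hermite_op_add hermite_op_smult)
    also have "\<dots> = (hermite_op ^^ Suc m) (pderiv p) + smult (2 * of_nat (Suc m)) ((hermite_op ^^ m) p)"
      by (simp add: algebra_simps smult_add_left)
    finally show ?thesis by simp
  qed
qed

lemma H2_Suc_right: "H2 m (Suc n) = [:0,1:] * H2 m n - smult (of_nat m) (H2 (m - 1) n)"
proof -
  have "monom (1::real) (Suc n) = [:0,1:] * monom 1 n"
    by (simp add: monom_Suc)
  then show ?thesis
    unfolding H2_def using hermite_op_power_times_X[of m "monom 1 n"] by simp
qed

text \<open>Three-term recurrence of the Hermite polynomials h_k = H_{k,0}: since h_k' = 2k h_{k-1},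
  we get h_{k+1} = 2X h_k - 2k h_{k-1}.\<close>

lemma H2_Suc_left_0: "H2 (Suc k) 0 = [:0,2:] * H2 k 0 - smult (2 * of_nat k) (H2 (k - 1) 0)"
proof -
  have "pderiv (H2 k 0) = smult (2 * of_nat k) (H2 (k - 1) 0)"
    unfolding H2_def by (simp add: pderiv_hermite_op_power hermite_op_power_0)
  then show ?thesis
    unfolding H2_def by (simp add: hermite_op_def)
qed


section \<open>Closed forms\<close>

lemma Suc_times_div_fact_Suc: "(of_nat (Suc t) :: real) * (a / (b * fact (Suc t))) = a / (b * fact t)"
  by (simp add: field_simps del: of_nat_Suc)

lemma sum_split_by_weight:
  fixes c :: "nat \<Rightarrow> real"
  assumes "\<And>i. N < w i \<Longrightarrow> c i = 0"
  shows "of_nat N * (\<Sum>i\<le>N. c i) = (\<Sum>i\<le>N. of_nat (N - w i) * c i) + (\<Sum>i\<le>N. of_nat (w i) * c i)"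
proof -
  have "of_nat N * c i = of_nat (N - w i) * c i + of_nat (w i) * c i" for i
    using assms[of i] by (cases "w i \<le> N") (simp_all flip: distrib_right of_nat_add)
  then show ?thesis
    by (simp add: sum_distrib_left flip: sum.distrib)
qed

text \<open>The i-th term of h_k(x)/k!, i.e. the coefficient of y^k in exp(2xy) exp(-y^2)
  coming from (2xy)^{k-2i} (-y^2)^i.\<close>

definition hermite_term :: "real \<Rightarrow> nat \<Rightarrow> nat \<Rightarrow> real" where
  "hermite_term x k i =
     (if 2 * i \<le> k then (-1) ^ i * (2 * x) ^ (k - 2 * i) / (fact i * fact (k - 2 * i)) else 0)"

definition hermite_sum :: "real \<Rightarrow> nat \<Rightarrow> real" where
  "hermite_sum x k = (\<Sum>i\<le>k. hermite_term x k i)"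

text \<open>Weighting the i-th term of degree k+1 by the exponent k+1-2i of 2x removes one factor 2x,
  and weighting it by 2i removes one factor -y^2; these are the two halves of the recurrence.\<close>

lemma hermite_term_lower_degree:
  "of_nat (Suc k - 2 * i) * hermite_term x (Suc k) i = 2 * x * hermite_term x k i"
proof (cases "2 * i \<le> k")
  case True
  then obtain t where t: "k - 2 * i = t" "Suc k - 2 * i = Suc t"
    by (metis Suc_diff_le)
  then show ?thesis
    using True Suc_times_div_fact_Suc[of t "(-1) ^ i * (2 * x) * (2 * x) ^ t" "fact i"]
    by (simp add: hermite_term_def mult.assoc del: of_nat_Suc fact_Suc)
next
  case False
  then show ?thesis by (auto simp: hermite_term_def)
qed

lemma hermite_term_lower_index:
  "of_nat (2 * i) * hermite_term x (Suc (Suc k)) i = (if i = 0 then 0 else -2 * hermite_term x k (i - 1))"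
proof (cases i)
  case 0
  then show ?thesis by simp
next
  case (Suc j)
  have "Suc (Suc k) - 2 * Suc j = k - 2 * j"
    by simp
  then have "of_nat (2 * i) * hermite_term x (Suc (Suc k)) i =
             2 * (of_nat (Suc j) * (if 2 * j \<le> k
                    then - ((-1) ^ j * (2 * x) ^ (k - 2 * j)) / (fact (k - 2 * j) * fact (Suc j)) else 0))"
    using Suc unfolding of_nat_mult by (simp add: hermite_term_def mult_ac del: of_nat_Suc fact_Suc)
  also have "\<dots> = -2 * hermite_term x k (i - 1)"
    using Suc by (simp add: hermite_term_def Suc_times_div_fact_Suc mult_ac)
  finally show ?thesis using Suc by simp
qed

text \<open>The Hermite recurrence for h_k/k!, matching the recurrence of lemma H2_Suc_left_0.\<close>

lemma hermite_sum_recurrence: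
  "of_nat (Suc (Suc k)) * hermite_sum x (Suc (Suc k)) = 2 * x * hermite_sum x (Suc k) - 2 * hermite_sum x k"
proof -
  let ?n = "Suc (Suc k)"
  have "of_nat ?n * hermite_sum x ?n =
        (\<Sum>i\<le>?n. of_nat (?n - 2 * i) * hermite_term x ?n i) + (\<Sum>i\<le>?n. of_nat (2 * i) * hermite_term x ?n i)"
    unfolding hermite_sum_def by (rule sum_split_by_weight[where w = "\<lambda>i. 2 * i"]) (simp add: hermite_term_def)
  also have "\<dots> = (\<Sum>i\<le>?n. 2 * x * hermite_term x (Suc k) i) +
                  (\<Sum>i\<le>?n. if i = 0 then 0 else -2 * hermite_term x k (i - 1))"
    by (simp only: hermite_term_lower_degree hermite_term_lower_index)
  also have "(\<Sum>i\<le>?n. 2 * x * hermite_term x (Suc k) i) = 2 * x * hermite_sum x (Suc k)"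
    unfolding sum.atMost_Suc[of _ "Suc k"] hermite_sum_def sum_distrib_left by (simp add: hermite_term_def)
  also have "(\<Sum>i\<le>?n. if i = 0 then 0 else -2 * hermite_term x k (i - 1)) = (\<Sum>i\<le>Suc k. -2 * hermite_term x k i)"
    unfolding sum.atMost_Suc_shift by simp
  also have "\<dots> = -2 * hermite_sum x k"
    unfolding sum.atMost_Suc[of _ k] hermite_sum_def sum_distrib_left by (simp add: hermite_term_def)
  finally show ?thesis by simp
qed

lemma poly_H2_left: "poly (H2 k 0) x = fact k * hermite_sum x k"
proof -
  have "poly (H2 k 0) x = fact k * hermite_sum x k \<and>
        poly (H2 (Suc k) 0) x = fact (Suc k) * hermite_sum x (Suc k)"
  proof (induction k)
    case 0
    have "H2 1 0 = [:0, 2:]"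
      using H2_Suc_left_0[of 0] by (simp add: H2_def[of 0])
    then show ?case
      by (simp add: H2_def[of 0] hermite_sum_def hermite_term_def)
  next
    case (Suc k)
    have "poly (H2 (Suc (Suc k)) 0) x = 2 * x * poly (H2 (Suc k) 0) x - 2 * of_nat (Suc k) * poly (H2 k 0) x"
      by (simp add: H2_Suc_left_0[of "Suc k"] algebra_simps)
    also have "\<dots> = fact (Suc k) * (2 * x * hermite_sum x (Suc k) - 2 * hermite_sum x k)"
      using Suc.IH by (simp add: algebra_simps del: of_nat_Suc)
    also have "\<dots> = fact (Suc (Suc k)) * hermite_sum x (Suc (Suc k))"
      by (simp add: hermite_sum_recurrence[symmetric] del: of_nat_Suc)
    finally show ?case using Suc.IH by simp
  qed
  then show ?thesis by simp
qed

text \<open>The j-th term of H_{m,n}(x)/(m! n!) =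
  \<Sum>_{j \<le> min m n} (-1)^j x^{n-j} h_{m-j}(x) / (j! (n-j)! (m-j)!).\<close>

definition H2_term :: "real \<Rightarrow> nat \<Rightarrow> nat \<Rightarrow> nat \<Rightarrow> real" where
  "H2_term x m n j =
     (if j \<le> m \<and> j \<le> n
      then (-1) ^ j * x ^ (n - j) * poly (H2 (m - j) 0) x / (fact j * fact (n - j) * fact (m - j))
      else 0)"

definition H2_sum :: "real \<Rightarrow> nat \<Rightarrow> nat \<Rightarrow> real" where
  "H2_sum x m n = (\<Sum>j\<le>n. H2_term x m n j)"

text \<open>As for the Hermite terms: weighting by the exponent n+1-j of x removes one factor x,
  weighting by j lowers both indices j and m by one.\<close>

lemma H2_term_lower_degree: "of_nat (Suc n - j) * H2_term x m (Suc n) j = x * H2_term x m n j"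
proof (cases "j \<le> n")
  case True
  then obtain t where t: "n - j = t" "Suc n - j = Suc t"
    by (metis Suc_diff_le)
  then show ?thesis
    using True Suc_times_div_fact_Suc[of t "x * ((-1) ^ j * x ^ t * poly (H2 (m - j) 0) x)" "fact j * fact (m - j)"]
    by (simp add: H2_term_def mult_ac del: of_nat_Suc fact_Suc)
next
  case False
  then show ?thesis by (auto simp: H2_term_def)
qed

lemma H2_term_lower_index:
  "of_nat j * H2_term x m (Suc n) j = (if j = 0 \<or> m = 0 then 0 else - H2_term x (m - 1) n (j - 1))"
proof (cases "j = 0 \<or> m = 0")
  case True
  then show ?thesis by (auto simp: H2_term_def)
next
  case False
  then obtain i l where il: "j = Suc i" "m = Suc l"
    by (metis not0_implies_Suc)
  then show ?thesis
    using Suc_times_div_fact_Suc[of i "- ((-1) ^ i * x ^ (n - i) * poly (H2 (l - i) 0) x)" "fact (n - i) * fact (l - i)"]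
    by (simp add: H2_term_def mult_ac del: of_nat_Suc fact_Suc)
qed

text \<open>The recurrence of lemma H2_Suc_right, divided by m! n!.\<close>

lemma H2_sum_recurrence:
  "of_nat (Suc n) * H2_sum x m (Suc n) = x * H2_sum x m n - (if m = 0 then 0 else H2_sum x (m - 1) n)"
proof -
  have "of_nat (Suc n) * H2_sum x m (Suc n) =
        (\<Sum>j\<le>Suc n. of_nat (Suc n - j) * H2_term x m (Suc n) j) + (\<Sum>j\<le>Suc n. of_nat j * H2_term x m (Suc n) j)"
    unfolding H2_sum_def by (rule sum_split_by_weight[where w = "\<lambda>j. j"]) (simp add: H2_term_def)
  also have "\<dots> = (\<Sum>j\<le>Suc n. x * H2_term x m n j) +
                  (\<Sum>j\<le>Suc n. if j = 0 \<or> m = 0 then 0 else - H2_term x (m - 1) n (j - 1))"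
    by (simp only: H2_term_lower_degree H2_term_lower_index)
  also have "(\<Sum>j\<le>Suc n. x * H2_term x m n j) = x * H2_sum x m n"
    unfolding sum.atMost_Suc[of _ n] H2_sum_def sum_distrib_left by (simp add: H2_term_def)
  also have "(\<Sum>j\<le>Suc n. if j = 0 \<or> m = 0 then 0 else - H2_term x (m - 1) n (j - 1)) =
             - (if m = 0 then 0 else H2_sum x (m - 1) n)"
    unfolding sum.atMost_Suc_shift H2_sum_def by (simp add: sum_negf)
  finally show ?thesis by simp
qed

lemma poly_H2: "poly (H2 m n) x = fact m * fact n * H2_sum x m n"
proof (induction n arbitrary: m)
  case 0
  then show ?case by (simp add: H2_sum_def H2_term_def)
next
  case (Suc n)
  have "poly (H2 m (Suc n)) x = x * poly (H2 m n) x - of_nat m * poly (H2 (m - 1) n) x"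
    by (simp add: H2_Suc_right)
  also have "\<dots> = fact m * fact n * (x * H2_sum x m n - (if m = 0 then 0 else H2_sum x (m - 1) n))"
  proof (cases m)
    case 0
    then show ?thesis using Suc.IH by (simp add: algebra_simps)
  next
    case (Suc l)
    then show ?thesis using Suc.IH[of m] Suc.IH[of l] by (simp add: algebra_simps del: of_nat_Suc)
  qed
  also have "\<dots> = fact m * fact (Suc n) * H2_sum x m (Suc n)"
    by (simp add: H2_sum_recurrence[symmetric] del: of_nat_Suc)
  finally show ?case .
qed


section \<open>Summation of absolutely summable families\<close>

lemma exp_series_has_sum: "((\<lambda>n. z ^ n / fact n) has_sum exp z) (UNIV :: nat set)"
  for z :: real
proof (rule norm_summable_imp_has_sum)
  show "summable (\<lambda>n. norm (z ^ n / fact n))"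
    using summable_exp[of "\<bar>z\<bar>"] by (simp add: abs_mult power_abs divide_inverse mult.commute)
  show "(\<lambda>n. z ^ n / fact n) sums exp z"
    using exp_converges[of z] by (simp add: divide_inverse mult.commute)
qed

text \<open>The product of two summable real families is summable on the product index set
  (real summability is absolute), with the product of the sums as its sum.\<close>

lemma has_sum_product:
  fixes f :: "'a \<Rightarrow> real" and g :: "'b \<Rightarrow> real"
  assumes f: "(f has_sum a) UNIV" and g: "(g has_sum b) UNIV"
  shows "((\<lambda>(p, q). f p * g q) has_sum (a * b)) UNIV"
proof -
  have f_abs: "(\<lambda>p. norm (f p)) summable_on UNIV" and g_abs: "(\<lambda>q. norm (g q)) summable_on UNIV"
    using f g summable_on_iff_abs_summable_on_real has_sum_imp_summable by blast+
  have row_sum: "(\<Sum>\<^sub>\<infinity>q. \<bar>f p * g q\<bar>) = \<bar>f p\<bar> * (\<Sum>\<^sub>\<infinity>q. \<bar>g q\<bar>)" for p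
    by (simp add: abs_mult infsum_cmult_right')
  have "(\<lambda>pq. norm ((\<lambda>(p, q). f p * g q) pq)) summable_on Sigma UNIV (\<lambda>_. UNIV)"
  proof (rule Infinite_Sum.abs_summable_on_Sigma_iff[THEN iffD2], intro conjI ballI)
    show "(\<lambda>q. norm ((\<lambda>(p, q). f p * g q) (p, q))) summable_on UNIV" for p
      using summable_on_cmult_right[OF g_abs, of "\<bar>f p\<bar>"] by (simp add: abs_mult)
    show "(\<lambda>p. norm (\<Sum>\<^sub>\<infinity>q. norm ((\<lambda>(p, q). f p * g q) (p, q)))) summable_on UNIV"
      using summable_on_cmult_left[OF f_abs] by (simp add: row_sum infsum_nonneg)
  qed
  then have summable: "(\<lambda>(p, q). f p * g q) summable_on Sigma UNIV (\<lambda>_. UNIV)"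
    by (rule abs_summable_summable)
  have "((\<lambda>(p, q). f p * g q) has_sum (a * b)) (Sigma UNIV (\<lambda>_. UNIV))"
    using has_sum_cmult_right[OF g] has_sum_cmult_left[OF f]
    by (intro has_sum_SigmaI[OF _ _ summable]) auto
  then show ?thesis by simp
qed

lemma has_sum_fibres:
  fixes f :: "'a \<Rightarrow> real" and \<pi> :: "'a \<Rightarrow> 'b"
  assumes f: "(f has_sum S) UNIV" and fin: "\<And>b. finite {a. \<pi> a = b}"
  shows "((\<lambda>b. \<Sum>a | \<pi> a = b. f a) has_sum S) UNIV"
proof -
  have "bij_betw snd (Sigma UNIV (\<lambda>b. {a. \<pi> a = b})) UNIV"
    by (rule bij_betwI[of _ _ _ "\<lambda>a. (\<pi> a, a)"]) auto
  then have "((\<lambda>p. f (snd p)) has_sum S) (Sigma UNIV (\<lambda>b. {a. \<pi> a = b}))"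
    using has_sum_reindex_bij_betw f by blast
  then show ?thesis
    by (rule has_sum_SigmaD) (use fin in auto)
qed

lemma sum_fibre_weight_2:
  fixes f g :: "nat \<Rightarrow> 'a :: semiring_0"
  shows "(\<Sum>p | (\<lambda>(b, i). b + 2 * i) p = k. (\<lambda>(b, i). f b * g i) p) =
         (\<Sum>i | 2 * i \<le> k. f (k - 2 * i) * g i)"
  by (rule sum.reindex_bij_witness[of _ "\<lambda>i. (k - 2 * i, i)" snd]) auto

lemma sum_fibre_diagonal:
  fixes f g h :: "nat \<Rightarrow> 'a :: semiring_0"
  shows "(\<Sum>p | (\<lambda>(a, k, j). (k + j, a + j)) p = (m, n). (\<lambda>(a, k, j). f a * g k * h j) p) =
         (\<Sum>j | j \<le> m \<and> j \<le> n. f (n - j) * g (m - j) * h j)"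
  by (rule sum.reindex_bij_witness[of _ "\<lambda>j. (n - j, m - j, j)" "\<lambda>p. snd (snd p)"]) auto

lemma finite_fibres_weight_2: "finite {p :: nat \<times> nat. (\<lambda>(b, i). b + 2 * i) p = k}"
  by (rule finite_subset[of _ "{..k} \<times> {..k}"]) auto

lemma finite_fibres_diagonal: "finite {p :: nat \<times> nat \<times> nat. (\<lambda>(a, k, j). (k + j, a + j)) p = mn}"
  by (rule finite_subset[of _ "{..snd mn} \<times> {..fst mn} \<times> {..fst mn}"]) auto


section \<open>Generating functions\<close>

text \<open>The generating function of the Hermite polynomials: grouping the product of the
  series of exp(2xy) and exp(-y^2) by the total degree in y.\<close>

lemma hermite_generating_function:
  fixes x y :: real
  shows "((\<lambda>k. poly (H2 k 0) x * y ^ k / fact k) has_sum exp (2 * x * y - y\<^sup>2)) UNIV"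
proof -
  define f where "f b = (2 * x * y) ^ b / fact b" for b :: nat
  define g where "g i = (- y\<^sup>2) ^ i / fact i" for i :: nat
  have "((\<lambda>(b, i). f b * g i) has_sum exp (2 * x * y) * exp (- y\<^sup>2)) UNIV"
    unfolding f_def g_def by (rule has_sum_product[OF exp_series_has_sum exp_series_has_sum])
  then have "((\<lambda>(b, i). f b * g i) has_sum exp (2 * x * y - y\<^sup>2)) UNIV"
    by (simp flip: exp_add)
  from has_sum_fibres[OF this finite_fibres_weight_2] show ?thesis
  proof (rule has_sum_cong[THEN iffD1, rotated])
    fix k :: nat
    have "f (k - 2 * i) * g i = hermite_term x k i * y ^ k" if "2 * i \<le> k" for i
    proof -
      obtain t where t: "k = 2 * i + t"
        using le_Suc_ex[OF \<open>2 * i \<le> k\<close>] by blast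
      have "(y\<^sup>2) ^ i = (y ^ i)\<^sup>2"
        by (simp add: mult.commute flip: power_mult)
      then show ?thesis
        by (simp add: f_def g_def t hermite_term_def power_add power_mult power_mult_distrib
                      power_minus[of "y\<^sup>2"] field_simps)
    qed
    then have "(\<Sum>i | 2 * i \<le> k. f (k - 2 * i) * g i) = (\<Sum>i | 2 * i \<le> k. hermite_term x k i * y ^ k)"
      by (intro sum.cong) auto
    also have "\<dots> = (\<Sum>i\<le>k. hermite_term x k i * y ^ k)"
      by (rule sum.mono_neutral_left) (auto simp: hermite_term_def)
    finally show "(\<Sum>p | (\<lambda>(b, i). b + 2 * i) p = k. (\<lambda>(b, i). f b * g i) p) = poly (H2 k 0) x * y ^ k / fact k"
      by (simp add: sum_fibre_weight_2 poly_H2_left hermite_sum_def sum_distrib_right)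
  qed
qed

text \<open>The (m, n) term of the main series, written as the fibre sum of the product of
  the series of exp(-xy), the Hermite generating function and exp(y^2).\<close>

lemma H2_series_term:
  fixes x y :: real
  shows "(-1) ^ n * poly (H2 m n) x * y ^ (m + n) / (fact m * fact n) =
         (\<Sum>j | j \<le> m \<and> j \<le> n. (- (x * y)) ^ (n - j) / fact (n - j) *
            (poly (H2 (m - j) 0) x * y ^ (m - j) / fact (m - j)) * ((y\<^sup>2) ^ j / fact j))"
proof -
  have "(- (x * y)) ^ (n - j) / fact (n - j) * (poly (H2 (m - j) 0) x * y ^ (m - j) / fact (m - j)) *
          ((y\<^sup>2) ^ j / fact j) = (-1) ^ n * H2_term x m n j * y ^ (m + n)"
    if "j \<le> m" "j \<le> n" for j
  proof -
    obtain a l where al: "n = j + a" "m = j + l"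
      using le_Suc_ex[OF \<open>j \<le> n\<close>] le_Suc_ex[OF \<open>j \<le> m\<close>] by blast
    have sign: "(-1::real) ^ (j + a) * (-1) ^ j = (-1) ^ a"
      by (simp add: power_add mult.assoc flip: power_add[of "-1::real" j j] mult_2[symmetric])
    show ?thesis
      using sign by (simp add: al H2_term_def power_add power_mult_distrib power2_eq_square
                               power_minus[of "x * y"] field_simps)
  qed
  then have "(\<Sum>j | j \<le> m \<and> j \<le> n. (- (x * y)) ^ (n - j) / fact (n - j) *
               (poly (H2 (m - j) 0) x * y ^ (m - j) / fact (m - j)) * ((y\<^sup>2) ^ j / fact j)) =
             (\<Sum>j | j \<le> m \<and> j \<le> n. (-1) ^ n * H2_term x m n j * y ^ (m + n))"
    by (intro sum.cong) auto
  also have "\<dots> = (\<Sum>j\<le>n. (-1) ^ n * H2_term x m n j * y ^ (m + n))"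
    by (rule sum.mono_neutral_left) (auto simp: H2_term_def)
  also have "\<dots> = (-1) ^ n * H2_sum x m n * y ^ (m + n)"
    by (simp add: H2_sum_def sum_distrib_left sum_distrib_right)
  also have "\<dots> = (-1) ^ n * poly (H2 m n) x * y ^ (m + n) / (fact m * fact n)"
    by (simp add: poly_H2)
  finally show ?thesis ..
qed

theorem mainTheorem13:
  fixes x y :: real
  shows "((\<lambda>(m, n). (-1) ^ n * poly (H2 m n) x * y ^ (m + n) / (fact m * fact n))
           has_sum exp (x * y)) (UNIV :: (nat \<times> nat) set)"
proof -
  define f where "f a = (- (x * y)) ^ a / fact a" for a :: nat
  define g where "g k = poly (H2 k 0) x * y ^ k / fact k" for k :: nat
  define h where "h j = (y\<^sup>2) ^ j / fact j" for j :: nat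
  have "((\<lambda>(a, k, j). f a * (g k * h j)) has_sum exp (- (x * y)) * (exp (2 * x * y - y\<^sup>2) * exp (y\<^sup>2))) UNIV"
    unfolding f_def g_def h_def
    using has_sum_product[OF exp_series_has_sum has_sum_product[OF hermite_generating_function exp_series_has_sum]]
    by (simp add: case_prod_unfold)
  then have "((\<lambda>(a, k, j). f a * g k * h j) has_sum exp (x * y)) UNIV"
    by (simp add: mult.assoc flip: exp_add)
  from has_sum_fibres[OF this finite_fibres_diagonal] show ?thesis
  proof (rule has_sum_cong[THEN iffD1, rotated])
    fix mn :: "nat \<times> nat"
    obtain m n where mn: "mn = (m, n)"
      by fastforce
    show "(\<Sum>p | (\<lambda>(a, k, j). (k + j, a + j)) p = mn. (\<lambda>(a, k, j). f a * g k * h j) p) =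
          (\<lambda>(m, n). (-1) ^ n * poly (H2 m n) x * y ^ (m + n) / (fact m * fact n)) mn"
      unfolding mn sum_fibre_diagonal by (simp add: H2_series_term f_def g_def h_def)
  qed
qed

end
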